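(* Let $\mathcal{G}=(\mathcal{V},\mathcal{E})$ be a finite tree with at least one edge and let $i\in\mathcal{V}$ have degree $d_i$. Then the return time of the begrudgingly backtracking random walk at $i$ is $$\tilde{\mathtt{t}}(i;\mathcal{G})=\frac{2|\mathcal{E}|}{d_i}.$$
   Context: Begrudgingly backtracking random walk (BBRW) on $\mathcal{G}$: $x_1$ is uniform on the neighbors of $x_0$; for $n\ge0$, given $x_n=u,x_{n+1}=v$, $x_{n+2}$ is uniform on $\mathcal{N}(v)\setminus\{u\}$ if this set is nonempty, and $x_{n+2}=u$ otherwise. With $\overline{T}_i=\min\{n>0:x_n=i\}$, the return time is $\tilde{\mathtt{t}}(i;\mathcal{G})=\mathbb{E}[\overline{T}_i\mid x_0=i]$. *)

theory Defs
  imports "HOL-Analysis.Analysis" "HOL-Library.Extended_Nonnegative_Real"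
begin

definition simple_graph :: "'a set \<Rightarrow> 'a set set \<Rightarrow> bool" where
  "simple_graph V E \<longleftrightarrow> finite V \<and> (\<forall>e\<in>E. e \<subseteq> V \<and> card e = 2)"

definition nbrs :: "'a set set \<Rightarrow> 'a \<Rightarrow> 'a set" where
  "nbrs E v = {u. {u, v} \<in> E}"

definition degree :: "'a set set \<Rightarrow> 'a \<Rightarrow> nat" where
  "degree E v = card (nbrs E v)"

definition connected_graph :: "'a set \<Rightarrow> 'a set set \<Rightarrow> bool" where
  "connected_graph V E \<longleftrightarrow>
     (\<forall>u\<in>V. \<forall>v\<in>V. (u, v) \<in> {(x, y). {x, y} \<in> E}\<^sup>*)"

definition is_cycle :: "'a set set \<Rightarrow> 'a list \<Rightarrow> bool" where
  "is_cycle E cs \<longleftrightarrow> length cs \<ge> 3 \<and> distinct cs \<and>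
     (\<forall>k. Suc k < length cs \<longrightarrow> {cs ! k, cs ! Suc k} \<in> E) \<and>
     {last cs, hd cs} \<in> E"

definition tree :: "'a set \<Rightarrow> 'a set set \<Rightarrow> bool" where
  "tree V E \<longleftrightarrow> simple_graph V E \<and> connected_graph V E \<and> (\<nexists>cs. is_cycle E cs)"

(* probability of transition to w, given previous vertex u and current vertex v *)
definition bbrw_step :: "'a set set \<Rightarrow> 'a \<Rightarrow> 'a \<Rightarrow> 'a \<Rightarrow> real" where
  "bbrw_step E u v w =
     (if nbrs E v - {u} \<noteq> {}
      then (if w \<in> nbrs E v - {u} then 1 / real (card (nbrs E v - {u})) else 0)
      else (if w = u then 1 else 0))"

(* probability that the BBRW started at xs!0 follows the trajectory xs (length \<ge> 2) *)
definition bbrw_path_prob :: "'a set set \<Rightarrow> 'a list \<Rightarrow> real" where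
  "bbrw_path_prob E xs =
     (if xs ! 1 \<in> nbrs E (xs ! 0) then 1 / real (degree E (xs ! 0)) else 0) *
     (\<Prod>k\<in>{0..<length xs - 2}. bbrw_step E (xs ! k) (xs ! Suc k) (xs ! Suc (Suc k)))"

(* P(first return time to i equals n | x_0 = i), for n \<ge> 1 *)
definition first_return_prob :: "'a set \<Rightarrow> 'a set set \<Rightarrow> 'a \<Rightarrow> nat \<Rightarrow> real" where
  "first_return_prob V E i n =
     (if n = 0 then 0 else
      (\<Sum>xs\<in>{xs. length xs = Suc n \<and> set xs \<subseteq> V \<and> xs ! 0 = i \<and> xs ! n = i \<and>
                  (\<forall>k. 0 < k \<and> k < n \<longrightarrow> xs ! k \<noteq> i)}.
         bbrw_path_prob E xs))"

(* expected return time E[T_i | x_0 = i] in [0, \<infinity>]; the term \<top> * P(T = \<infinity>)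
   accounts for the event of never returning *)
definition return_time :: "'a set \<Rightarrow> 'a set set \<Rightarrow> 'a \<Rightarrow> ennreal" where
  "return_time V E i =
     (\<Sum>n. of_nat n * ennreal (first_return_prob V E i n))
     + top * (1 - (\<Sum>n. ennreal (first_return_prob V E i n)))"

end

theory Submission
  imports Defs
begin

(* The walk is a Markov chain on arcs (x_n, x_n+1). Its transition matrix is doubly
   stochastic: the arcs (u, v) entering v send total probability one to every arc (v, w). Hence the
   weight c that puts 1/d_i on every arc not entering i satisfies c = a + K c, where a (uniform on
   the arcs leaving i) is the law of (x_0, x_1) and K is the transition operator of the walk killed
   on entering i. Iterating, c = a + K a + ... + K^(N-1) a + K^N c, and the mass of K^n a is
   P(T > n + 1). In a tree the killed walk reaches every arc not entering i (run to a leaf, turn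
   back, and reverse the path), so K^N c vanishes in the limit. Therefore
   E[T] = sum_n P(T > n) = 1 + mass c = 1 + (2|E| - d_i)/d_i = 2|E|/d_i. *)

section \<open>Expectations as sums of tail probabilities\<close>

lemma decseq_summable_imp_mult_tendsto_zero:
  fixes q :: "nat \<Rightarrow> real"
  assumes nonneg: "\<And>n. 0 \<le> q n" and dec: "decseq q" and summable: "summable q"
  shows "(\<lambda>n. real n * q n) \<longlonglongrightarrow> 0"
proof (rule LIMSEQ_I)
  fix r :: real assume "0 < r"
  then obtain M where M: "\<And>m n. m \<ge> M \<Longrightarrow> norm (sum q {m..<n}) < r / 2"
    using summable unfolding summable_Cauchy by (metis half_gt_zero)
  have "norm (real n * q n - 0) < r" if "n \<ge> 2 * M" for n
  proof -
    \<comment> \<open>the terms from \<open>n div 2\<close> to \<open>n\<close> are all at least \<open>q n\<close>\<close>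
    have "real n / 2 * q n \<le> real (card {n div 2..<Suc n}) * q n"
      using nonneg[of n] by (intro mult_right_mono) auto
    also have "\<dots> \<le> sum q {n div 2..<Suc n}"
      using dec by (intro sum_bounded_below) (auto simp: decseq_def)
    also have "\<dots> < r / 2"
      using M[of "n div 2" "Suc n"] that sum_nonneg[of "{n div 2..<Suc n}" q] nonneg by auto
    finally show ?thesis using nonneg[of n] by simp
  qed
  then show "\<exists>N. \<forall>n\<ge>N. norm (real n * q n - 0) < r" by blast
qed

lemma tail_sum_sums:
  fixes q :: "nat \<Rightarrow> real"
  assumes "\<And>n. 0 \<le> q n" and "decseq q" and "summable q"
  shows "(\<lambda>n. real (Suc n) * (q n - q (Suc n))) sums suminf q"
proof -
  have partial: "(\<Sum>k<N. real (Suc k) * (q k - q (Suc k))) = (\<Sum>k<N. q k) - real N * q N" for N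
    by (induction N) (simp_all add: algebra_simps)
  have "(\<lambda>N. (\<Sum>k<N. q k) - real N * q N) \<longlonglongrightarrow> suminf q - 0"
    using assms by (intro tendsto_diff summable_LIMSEQ decseq_summable_imp_mult_tendsto_zero)
  then show ?thesis unfolding sums_def partial by simp
qed

text \<open>\<open>q n\<close> plays the role of \<open>P(T > n)\<close>.\<close>

lemma return_time_eq_suminf_tail:
  fixes q :: "nat \<Rightarrow> real"
  assumes first_return: "\<And>n. first_return_prob V E i (Suc n) = q n - q (Suc n)"
    and "q 0 = 1" and nonneg: "\<And>n. 0 \<le> q n" and dec: "decseq q" and "summable q"
  shows "return_time V E i = ennreal (suminf q)"
proof -
  define p where "p = first_return_prob V E i"
  have p0: "p 0 = 0" by (simp add: p_def first_return_prob_def)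
  have p_nonneg: "0 \<le> p n" for n
    using dec p0 unfolding p_def by (cases n) (auto simp: first_return decseq_Suc_iff)
  have "(\<lambda>n. p (Suc n)) sums (q 0 - 0)"
    unfolding p_def first_return
    by (intro telescope_sums' summable_LIMSEQ_zero) fact
  then have "p sums 1" using p0 \<open>q 0 = 1\<close> by (simp add: sums_Suc_iff)
  then have total: "(\<Sum>n. ennreal (p n)) = 1"
    using suminf_ennreal_eq[OF p_nonneg \<open>p sums 1\<close>] by simp
  have "(\<lambda>n. real (Suc n) * p (Suc n)) sums suminf q"
    unfolding p_def first_return using nonneg dec \<open>summable q\<close> by (rule tail_sum_sums)
  then have "(\<lambda>n. real n * p n) sums suminf q"
    using sums_Suc_iff[of "\<lambda>n. real n * p n"] by simp
  then have "(\<Sum>n. ennreal (real n * p n)) = ennreal (suminf q)"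
    using p_nonneg by (intro suminf_ennreal_eq) simp_all
  then have "(\<Sum>n. of_nat n * ennreal (p n)) = ennreal (suminf q)"
    by (simp add: ennreal_mult p_nonneg ennreal_of_nat_eq_real_of_nat)
  then show ?thesis using total by (simp add: return_time_def p_def)
qed

section \<open>The walk on the arcs of a finite simple graph\<close>

lemma is_cycleI:
  assumes "successively (\<lambda>x y. {x, y} \<in> E) cs" and "distinct cs" and "3 \<le> length cs"
    and "{last cs, hd cs} \<in> E"
  shows "is_cycle E cs"
  using assms by (simp add: is_cycle_def successively_conv_nth)

lemma mem_nbrs_iff: "u \<in> nbrs E v \<longleftrightarrow> {u, v} \<in> E"
  by (simp add: nbrs_def)

locale finite_graph =
  fixes V :: "'a set" and E :: "'a set set"
  assumes graph: "simple_graph V E"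
begin

lemma finite_V: "finite V"
  using graph by (simp add: simple_graph_def)

lemma edge_in_V: "{u, v} \<in> E \<Longrightarrow> u \<in> V \<and> v \<in> V"
  using graph by (auto simp: simple_graph_def)

lemma edge_ends_distinct: "{u, v} \<in> E \<Longrightarrow> u \<noteq> v"
  using graph by (fastforce simp: simple_graph_def)

lemma nbrs_subset_V: "nbrs E v \<subseteq> V"
  using edge_in_V by (auto simp: nbrs_def)

lemma finite_nbrs: "finite (nbrs E v)"
  using nbrs_subset_V finite_V by (rule finite_subset)

lemma bbrw_step_nonneg: "0 \<le> bbrw_step E u v w"
  by (simp add: bbrw_step_def)

lemma bbrw_step_pos_iff:
  "0 < bbrw_step E u v w \<longleftrightarrow> w \<in> nbrs E v - {u} \<or> (nbrs E v - {u} = {} \<and> w = u)"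
  using finite_nbrs[of v] by (auto simp: bbrw_step_def card_gt_0_iff)

lemma bbrw_step_row_sum:
  assumes "{u, v} \<in> E"
  shows "(\<Sum>w\<in>V. bbrw_step E u v w) = 1"
proof (cases "nbrs E v - {u} = {}")
  case True
  then show ?thesis using assms edge_in_V finite_V by (simp add: bbrw_step_def)
next
  case False
  let ?N = "nbrs E v - {u}"
  have "(\<Sum>w\<in>V. bbrw_step E u v w) = (\<Sum>w\<in>V. if w \<in> ?N then 1 / real (card ?N) else 0)"
    using False by (simp add: bbrw_step_def)
  also have "\<dots> = (\<Sum>w\<in>?N. 1 / real (card ?N))"
    using nbrs_subset_V finite_V by (intro sum.mono_neutral_cong_right) auto
  also have "\<dots> = 1" using False finite_nbrs by simp
  finally show ?thesis .
qed

text \<open>Together with the row sums this makes the transition matrix of the walk on arcs doubly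
  stochastic, so the uniform measure on arcs is invariant.\<close>

lemma bbrw_step_column_sum:
  "(\<Sum>u\<in>nbrs E v. bbrw_step E u v w) = (if w \<in> nbrs E v then 1 else 0)"
proof (cases "w \<in> nbrs E v")
  case False
  then have "bbrw_step E u v w = 0" if "u \<in> nbrs E v" for u
    using that bbrw_step_nonneg[of u v w] bbrw_step_pos_iff[of u v w] by fastforce
  then show ?thesis using False by simp
next
  case w: True
  let ?N = "nbrs E v"
  have fin: "finite ?N" by (rule finite_nbrs)
  show ?thesis
  proof (cases "?N = {w}")
    case True
    then show ?thesis by (simp add: bbrw_step_def)
  next
    case False
    then obtain w' where w': "w' \<in> ?N" "w' \<noteq> w" using w by blast
    then have card: "2 \<le> card ?N"
      using w card_le_Suc0_iff_eq[OF fin] by (metis not_less_eq_eq numeral_2_eq_2)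
    have "(\<Sum>u\<in>?N. bbrw_step E u v w) = (\<Sum>u\<in>?N - {w}. 1 / real (card ?N - 1))"
      using w w' fin by (intro sum.mono_neutral_cong_right) (auto simp: bbrw_step_def)
    also have "\<dots> = 1" using w fin card by simp
    finally show ?thesis using w by simp
  qed
qed

definition arcs :: "('a \<times> 'a) set" where
  "arcs = {(u, v). {u, v} \<in> E}"

lemma arcs_subset: "arcs \<subseteq> V \<times> V"
  using edge_in_V by (auto simp: arcs_def)

lemma finite_arcs: "finite arcs"
  using finite_subset[OF arcs_subset] finite_V by simp

lemma card_arcs: "card arcs = 2 * card E"
proof -
  define pairs where "pairs e = {(u, v). {u, v} = e}" for e :: "'a set"
  have card_pairs: "card (pairs e) = 2" if "e \<in> E" for e
  proof -
    have "card e = 2" using that graph by (simp add: simple_graph_def)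
    then obtain a b where "e = {a, b}" "a \<noteq> b" by (auto simp: card_2_iff)
    then have "pairs e = {(a, b), (b, a)}" "a \<noteq> b" by (auto simp: pairs_def doubleton_eq_iff)
    then show ?thesis by simp
  qed
  then have finite_pairs: "\<forall>e\<in>E. finite (pairs e)" by (auto intro: card_ge_0_finite)
  have "E \<subseteq> Pow V" using graph by (auto simp: simple_graph_def)
  then have "finite E" using finite_V by (metis finite_Pow_iff finite_subset)
  have "arcs = (\<Union>e\<in>E. pairs e)" by (auto simp: arcs_def pairs_def)
  also have "card \<dots> = (\<Sum>e\<in>E. card (pairs e))"
    by (rule card_UN_disjoint) (use \<open>finite E\<close> finite_pairs in \<open>auto simp: pairs_def\<close>)
  finally show ?thesis using card_pairs by simp
qed

definition bbrw_move :: "'a \<times> 'a \<Rightarrow> 'a \<times> 'a \<Rightarrow> bool" where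
  "bbrw_move s t \<longleftrightarrow> snd s = fst t \<and> {fst s, snd s} \<in> E \<and> 0 < bbrw_step E (fst s) (snd s) (snd t)"

definition bbrw_move_avoiding :: "'a \<Rightarrow> 'a \<times> 'a \<Rightarrow> 'a \<times> 'a \<Rightarrow> bool" where
  "bbrw_move_avoiding j s t \<longleftrightarrow> bbrw_move s t \<and> snd t \<noteq> j"

lemma bbrw_move_arc: "bbrw_move s t \<Longrightarrow> {fst t, snd t} \<in> E"
  by (auto simp: bbrw_move_def bbrw_step_pos_iff mem_nbrs_iff insert_commute)

lemma bbrw_move_rtranclp_arc: "bbrw_move\<^sup>*\<^sup>* s t \<Longrightarrow> {fst s, snd s} \<in> E \<Longrightarrow> {fst t, snd t} \<in> E"
  by (induction rule: rtranclp_induct) (auto dest: bbrw_move_arc)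

lemma bbrw_move_reverse:
  assumes "bbrw_move (u, v) (v', w)"
  shows "bbrw_move (w, v) (v, u)"
proof -
  have "{w, v} \<in> E" using bbrw_move_arc[OF assms] assms by (simp add: bbrw_move_def insert_commute)
  moreover have "0 < bbrw_step E w v u"
    using assms by (cases "w = u") (auto simp: bbrw_move_def bbrw_step_pos_iff mem_nbrs_iff)
  ultimately show ?thesis by (simp add: bbrw_move_def)
qed

text \<open>Reversing a walk that enters \<open>j\<close> only at its end gives a walk that leaves \<open>j\<close> and never
  comes back.\<close>

lemma bbrw_move_rtranclp_reverse_avoiding:
  assumes "bbrw_move\<^sup>*\<^sup>* s t" and "{fst s, snd s} \<in> E" and "snd t = j" and "fst s \<noteq> j"
  shows "\<exists>x. {j, x} \<in> E \<and> (bbrw_move_avoiding j)\<^sup>*\<^sup>* (j, x) (snd s, fst s)"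
  using assms
proof (induction rule: converse_rtranclp_induct)
  case base
  then show ?case by (auto simp: insert_commute)
next
  case (step s s')
  show ?case
  proof (cases "snd s = j")
    case True
    then show ?thesis using step.prems by (auto simp: insert_commute)
  next
    case False
    then have "fst s' \<noteq> j" using step.hyps(1) by (simp add: bbrw_move_def)
    then obtain x where "{j, x} \<in> E" and walk: "(bbrw_move_avoiding j)\<^sup>*\<^sup>* (j, x) (snd s', fst s')"
      using step.IH step.prems(2) bbrw_move_arc[OF step.hyps(1)] by blast
    moreover have "bbrw_move_avoiding j (snd s', fst s') (snd s, fst s)"
    proof -
      have "bbrw_move (fst s, snd s) (fst s', snd s')" using step.hyps(1) by simp
      moreover have "fst s' = snd s" using step.hyps(1) by (simp add: bbrw_move_def)
      ultimately show ?thesis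
        using bbrw_move_reverse step.prems(3) by (simp add: bbrw_move_avoiding_def)
    qed
    ultimately show ?thesis by (meson rtranclp.rtrancl_into_rtrancl)
  qed
qed

text \<open>Non-backtracking walks, stored with the most recent vertex first.\<close>

inductive nb_walk :: "'a list \<Rightarrow> bool" where
  edge: "{u, v} \<in> E \<Longrightarrow> nb_walk [v, u]"
| extend: "nb_walk (v # u # xs) \<Longrightarrow> {v, w} \<in> E \<Longrightarrow> w \<noteq> u \<Longrightarrow> nb_walk (w # v # u # xs)"

lemma nb_walk_successively: "nb_walk xs \<Longrightarrow> successively (\<lambda>x y. {x, y} \<in> E) xs"
  by (induction rule: nb_walk.induct) (auto simp: insert_commute)

lemma nb_walk_subset_V: "nb_walk xs \<Longrightarrow> set xs \<subseteq> V"
  by (induction rule: nb_walk.induct) (auto dest: edge_in_V)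

end

section \<open>In a tree the walk reaches every arc\<close>

locale finite_tree =
  fixes V :: "'a set" and E :: "'a set set"
  assumes tree: "tree V E"

sublocale finite_tree \<subseteq> finite_graph
  using tree by unfold_locales (simp add: tree_def)

context finite_tree
begin

lemma no_cycle: "\<not> is_cycle E cs"
  using tree by (auto simp: tree_def)

lemma nbrs_nonempty:
  assumes "j \<in> V" and "E \<noteq> {}"
  shows "nbrs E j \<noteq> {}"
proof -
  obtain a b where ab: "{a, b} \<in> E"
    using assms(2) graph unfolding simple_graph_def by (metis card_2_iff ex_in_conv)
  show ?thesis
  proof (cases "a = j")
    case True
    then have "b \<in> nbrs E j" using ab by (simp add: mem_nbrs_iff insert_commute)
    then show ?thesis by blast
  next
    case False
    have "(j, a) \<in> {(x, y). {x, y} \<in> E}\<^sup>*"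
      using tree ab assms(1) edge_in_V by (auto simp: tree_def connected_graph_def)
    then obtain y where "{j, y} \<in> E" using False by (auto elim: converse_rtranclE)
    then have "y \<in> nbrs E j" by (simp add: mem_nbrs_iff insert_commute)
    then show ?thesis by blast
  qed
qed

lemma nb_walk_distinct: "nb_walk xs \<Longrightarrow> distinct xs"
proof (induction rule: nb_walk.induct)
  case (edge u v)
  then show ?case using edge_ends_distinct by auto
next
  case (extend v u xs w)
  have "w \<notin> set xs"
  proof
    assume "w \<in> set xs"
    then obtain ys zs where xs: "xs = ys @ w # zs" and "w \<notin> set ys"
      by (metis split_list_first)
    let ?cs = "w # v # u # ys"
    have "successively (\<lambda>x y. {x, y} \<in> E) (?cs @ w # zs)"
      using nb_walk_successively[OF nb_walk.extend[OF extend.hyps]] xs by simp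
    then have "successively (\<lambda>x y. {x, y} \<in> E) ?cs \<and> {last ?cs, hd ?cs} \<in> E"
      unfolding successively_append_iff by simp
    moreover have "distinct ?cs"
      using extend.IH extend.hyps edge_ends_distinct \<open>w \<notin> set ys\<close> xs by auto
    ultimately show False using no_cycle is_cycleI[of E ?cs] by simp
  qed
  then show ?case using extend edge_ends_distinct by auto
qed

lemma nb_walk_length_le:
  assumes "nb_walk xs"
  shows "length xs \<le> card V"
proof -
  have "card (set xs) \<le> card V" using finite_V nb_walk_subset_V[OF assms] by (rule card_mono)
  then show ?thesis using distinct_card[OF nb_walk_distinct[OF assms]] by simp
qed

text \<open>Keep walking without backtracking until a leaf is reached, turn around there and retrace the
  walk; this terminates because non-backtracking walks in a tree do not repeat vertices.\<close>

lemma nb_walk_bounce: "nb_walk (v # u # xs) \<Longrightarrow> bbrw_move\<^sup>*\<^sup>* (u, v) (v, u)"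
proof (induction "card V - length xs" arbitrary: u v xs rule: less_induct)
  case less
  have uv: "{u, v} \<in> E" using nb_walk_successively[OF less.prems] by (simp add: insert_commute)
  show ?case
  proof (cases "nbrs E v - {u} = {}")
    case True
    then have "bbrw_move (u, v) (v, u)" using uv by (simp add: bbrw_move_def bbrw_step_def)
    then show ?thesis by simp
  next
    case False
    then obtain w where w: "w \<in> nbrs E v" "w \<noteq> u" by blast
    then have walk: "nb_walk (w # v # u # xs)"
      using less.prems by (auto intro: nb_walk.extend simp: mem_nbrs_iff insert_commute)
    have "card V - length (u # xs) < card V - length xs"
      using nb_walk_length_le[OF walk] by simp
    then have "bbrw_move\<^sup>*\<^sup>* (v, w) (w, v)" using walk by (rule less.hyps)
    moreover have "bbrw_move (u, v) (v, w)"
      using uv w by (simp add: bbrw_move_def bbrw_step_pos_iff)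
    moreover have "bbrw_move (w, v) (v, u)"
      using uv w by (simp add: bbrw_move_def bbrw_step_pos_iff mem_nbrs_iff insert_commute)
    ultimately show ?thesis
      by (meson converse_rtranclp_into_rtranclp rtranclp.rtrancl_into_rtrancl)
  qed
qed

lemma bbrw_move_to_nbr:
  assumes "{u, v} \<in> E" and "w \<in> nbrs E v"
  shows "bbrw_move\<^sup>*\<^sup>* (u, v) (v, w)"
proof (cases "w = u")
  case True
  then show ?thesis using assms nb_walk_bounce nb_walk.edge by blast
next
  case False
  then have "bbrw_move (u, v) (v, w)" using assms by (simp add: bbrw_move_def bbrw_step_pos_iff)
  then show ?thesis by simp
qed

lemma bbrw_move_reaches_vertex:
  assumes "(v, y) \<in> {(x, y). {x, y} \<in> E}\<^sup>*" and "{u, v} \<in> E"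
  shows "\<exists>x. bbrw_move\<^sup>*\<^sup>* (u, v) (x, y)"
  using assms(1)
proof (induction rule: rtrancl_induct)
  case base
  then show ?case by blast
next
  case (step y z)
  then obtain x where walk: "bbrw_move\<^sup>*\<^sup>* (u, v) (x, y)" by blast
  moreover have "bbrw_move\<^sup>*\<^sup>* (x, y) (y, z)"
    using bbrw_move_rtranclp_arc[OF walk] assms(2) step(2)
    by (intro bbrw_move_to_nbr) (simp_all add: mem_nbrs_iff insert_commute)
  ultimately show ?case by (meson rtranclp_trans)
qed

lemma bbrw_move_avoiding_reaches_arc:
  assumes "j \<in> V" and "{v, w} \<in> E" and "w \<noteq> j"
  shows "\<exists>x. {j, x} \<in> E \<and> (bbrw_move_avoiding j)\<^sup>*\<^sup>* (j, x) (v, w)"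
proof -
  have "(v, j) \<in> {(x, y). {x, y} \<in> E}\<^sup>*"
    using tree assms edge_in_V by (auto simp: tree_def connected_graph_def)
  moreover have "{w, v} \<in> E" using assms(2) by (simp add: insert_commute)
  ultimately obtain y where "bbrw_move\<^sup>*\<^sup>* (w, v) (y, j)"
    using bbrw_move_reaches_vertex by blast
  from bbrw_move_rtranclp_reverse_avoiding[OF this] show ?thesis
    using assms by (simp add: insert_commute)
qed

end

section \<open>The walk killed on its return to \<open>i\<close>\<close>

locale bbrw_taboo = finite_graph +
  fixes i :: 'a
  assumes i_in_V: "i \<in> V" and nbrs_i_nonempty: "nbrs E i \<noteq> {}"
begin

abbreviation deg :: real where
  "deg \<equiv> real (degree E i)"

lemma deg_pos: "0 < deg"
  using nbrs_i_nonempty finite_nbrs by (simp add: degree_def card_gt_0_iff)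

definition init_dist :: "'a \<times> 'a \<Rightarrow> real" where
  "init_dist t = (if fst t = i \<and> snd t \<in> nbrs E i then 1 / deg else 0)"

definition taboo_step :: "('a \<times> 'a \<Rightarrow> real) \<Rightarrow> 'a \<times> 'a \<Rightarrow> real" where
  "taboo_step \<mu> t =
     (if snd t \<noteq> i \<and> snd t \<in> V then (\<Sum>u\<in>V. \<mu> (u, fst t) * bbrw_step E u (fst t) (snd t)) else 0)"

text \<open>\<open>taboo_dist n (u, v)\<close> is the probability that \<open>(x\<^sub>n, x\<^sub>n\<^sub>+\<^sub>1) = (u, v)\<close> and
  \<open>x\<^sub>1, \<dots>, x\<^sub>n\<^sub>+\<^sub>1 \<noteq> i\<close> (see \<open>sum_avoiding_paths\<close>); its mass is \<open>P(T > n + 1)\<close>.\<close>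

definition taboo_dist :: "nat \<Rightarrow> 'a \<times> 'a \<Rightarrow> real" where
  "taboo_dist n = (taboo_step ^^ n) init_dist"

definition mass :: "('a \<times> 'a \<Rightarrow> real) \<Rightarrow> real" where
  "mass \<mu> = (\<Sum>u\<in>V. \<Sum>v\<in>V. \<mu> (u, v))"

definition survival :: "nat \<Rightarrow> real" where
  "survival n = mass (taboo_dist n)"

lemma taboo_step_nonneg: "(\<And>s. 0 \<le> \<mu> s) \<Longrightarrow> 0 \<le> taboo_step \<mu> t"
  unfolding taboo_step_def by (auto intro!: sum_nonneg mult_nonneg_nonneg bbrw_step_nonneg)

lemma taboo_step_mono: "(\<And>s. \<mu> s \<le> \<nu> s) \<Longrightarrow> taboo_step \<mu> t \<le> taboo_step \<nu> t"
  unfolding taboo_step_def by (auto intro!: sum_mono mult_right_mono bbrw_step_nonneg)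

lemma taboo_step_add: "taboo_step (\<lambda>s. \<mu> s + \<nu> s) t = taboo_step \<mu> t + taboo_step \<nu> t"
  by (simp add: taboo_step_def distrib_right sum.distrib)

lemma taboo_step_sum:
  "finite K \<Longrightarrow> taboo_step (\<lambda>s. \<Sum>k\<in>K. c k * f k s) t = (\<Sum>k\<in>K. c k * taboo_step (f k) t)"
  by (simp add: taboo_step_def sum_distrib_right sum_distrib_left sum.swap[of _ K] mult.assoc)

lemma funpow_taboo_step_nonneg: "(\<And>s. 0 \<le> \<mu> s) \<Longrightarrow> 0 \<le> (taboo_step ^^ n) \<mu> t"
  by (induction n arbitrary: t) (simp_all add: taboo_step_nonneg)

lemma funpow_taboo_step_mono:
  "(\<And>s. \<mu> s \<le> \<nu> s) \<Longrightarrow> (taboo_step ^^ n) \<mu> t \<le> (taboo_step ^^ n) \<nu> t"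
  by (induction n arbitrary: t) (simp_all add: taboo_step_mono)

lemma funpow_taboo_step_add:
  "(taboo_step ^^ n) (\<lambda>s. \<mu> s + \<nu> s) = (\<lambda>s. (taboo_step ^^ n) \<mu> s + (taboo_step ^^ n) \<nu> s)"
proof (induction n)
  case (Suc n)
  then show ?case by (simp add: taboo_step_add[symmetric])
qed simp

lemma funpow_taboo_step_sum:
  assumes "finite K"
  shows "(taboo_step ^^ n) (\<lambda>s. \<Sum>k\<in>K. c k * f k s) = (\<lambda>s. \<Sum>k\<in>K. c k * (taboo_step ^^ n) (f k) s)"
proof (induction n)
  case (Suc n)
  then show ?case using assms by (simp add: taboo_step_sum[symmetric])
qed simp

lemma funpow_taboo_step_taboo_dist: "(taboo_step ^^ N) (taboo_dist k) = taboo_dist (N + k)"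
  by (simp only: taboo_dist_def funpow_add comp_apply)

lemma taboo_dist_nonneg: "0 \<le> taboo_dist n t"
  unfolding taboo_dist_def by (rule funpow_taboo_step_nonneg) (simp add: init_dist_def)

lemma taboo_dist_nonzero_imp_arc: "taboo_dist n (u, v) \<noteq> 0 \<Longrightarrow> {u, v} \<in> E"
proof (induction n arbitrary: u v)
  case 0
  then show ?case
    by (auto simp: taboo_dist_def init_dist_def mem_nbrs_iff insert_commute split: if_splits)
next
  case (Suc n)
  then obtain u' where "u' \<in> V" and "taboo_dist n (u', u) * bbrw_step E u' u v \<noteq> 0"
    by (auto simp: taboo_dist_def taboo_step_def split: if_splits
        intro: sum.not_neutral_contains_not_neutral)
  then have "{u', u} \<in> E" and "0 < bbrw_step E u' u v"
    using Suc.IH bbrw_step_nonneg[of u' u v] by auto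
  then show ?case by (auto simp: bbrw_step_pos_iff mem_nbrs_iff insert_commute)
qed

lemma mass_nonneg: "(\<And>t. 0 \<le> \<mu> t) \<Longrightarrow> 0 \<le> mass \<mu>"
  unfolding mass_def by (intro sum_nonneg) auto

lemma mass_mono: "(\<And>t. \<mu> t \<le> \<nu> t) \<Longrightarrow> mass \<mu> \<le> mass \<nu>"
  unfolding mass_def by (intro sum_mono) auto

lemma mass_add: "mass (\<lambda>t. \<mu> t + \<nu> t) = mass \<mu> + mass \<nu>"
  by (simp add: mass_def sum.distrib)

lemma mass_sum: "mass (\<lambda>t. \<Sum>k\<in>K. f k t) = (\<Sum>k\<in>K. mass (f k))"
  by (simp add: mass_def sum.swap[of _ K])

lemma mass_scale: "mass (\<lambda>t. c * \<mu> t) = c * mass \<mu>"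
  by (simp add: mass_def sum_distrib_left)

lemma survival_nonneg: "0 \<le> survival n"
  unfolding survival_def by (rule mass_nonneg) (rule taboo_dist_nonneg)

lemma survival_0: "survival 0 = 1"
proof -
  have "survival 0 = (\<Sum>u\<in>V. if u = i then (\<Sum>v\<in>V. if v \<in> nbrs E i then 1 / deg else 0) else 0)"
    unfolding survival_def mass_def taboo_dist_def
    by (intro sum.cong refl) (auto simp: init_dist_def)
  also have "\<dots> = (\<Sum>v\<in>nbrs E i. 1 / deg)"
    using finite_V i_in_V nbrs_subset_V by (simp add: sum.If_cases Int_absorb1)
  also have "\<dots> = 1" using deg_pos by (simp add: degree_def)
  finally show ?thesis .
qed

lemma survival_Suc:
  "survival (Suc n) = survival n - (\<Sum>u\<in>V. \<Sum>v\<in>V. taboo_dist n (u, v) * bbrw_step E u v i)"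
proof -
  have leave: "(\<Sum>w\<in>V - {i}. taboo_dist n (u, v) * bbrw_step E u v w)
      = taboo_dist n (u, v) - taboo_dist n (u, v) * bbrw_step E u v i" for u v
  proof (cases "taboo_dist n (u, v) = 0")
    case False
    then have "(\<Sum>w\<in>V. bbrw_step E u v w) = 1"
      by (intro bbrw_step_row_sum taboo_dist_nonzero_imp_arc)
    then have "(\<Sum>w\<in>V - {i}. bbrw_step E u v w) = 1 - bbrw_step E u v i"
      using finite_V i_in_V by (simp add: sum_diff1)
    then show ?thesis by (metis sum_distrib_left right_diff_distrib mult_1_right)
  qed simp
  have "survival (Suc n) = (\<Sum>v\<in>V. \<Sum>w\<in>V - {i}. \<Sum>u\<in>V. taboo_dist n (u, v) * bbrw_step E u v w)"
    using finite_V
    by (simp add: survival_def mass_def taboo_dist_def taboo_step_def sum.If_cases Diff_eq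
        Collect_neg_eq singleton_conv)
  also have "\<dots> = (\<Sum>v\<in>V. \<Sum>u\<in>V. \<Sum>w\<in>V - {i}. taboo_dist n (u, v) * bbrw_step E u v w)"
    by (intro sum.cong refl sum.swap)
  also have "\<dots> = (\<Sum>u\<in>V. \<Sum>v\<in>V. taboo_dist n (u, v) - taboo_dist n (u, v) * bbrw_step E u v i)"
    by (subst sum.swap) (simp add: leave)
  also have "\<dots> = survival n - (\<Sum>u\<in>V. \<Sum>v\<in>V. taboo_dist n (u, v) * bbrw_step E u v i)"
    by (simp add: survival_def mass_def sum_subtractf)
  finally show ?thesis .
qed

lemma decseq_survival: "decseq survival"
  by (rule decseq_SucI)
    (simp add: survival_Suc sum_nonneg taboo_dist_nonneg bbrw_step_nonneg)

lemma taboo_dist_pos_if_reachable: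
  assumes "(bbrw_move_avoiding i)\<^sup>*\<^sup>* (i, x) t" and "{i, x} \<in> E"
  shows "\<exists>n. 0 < taboo_dist n t"
  using assms(1)
proof (induction rule: rtranclp_induct)
  case base
  have "0 < taboo_dist 0 (i, x)"
    using assms(2) deg_pos by (simp add: taboo_dist_def init_dist_def mem_nbrs_iff insert_commute)
  then show ?case by blast
next
  case (step s t)
  then obtain n where n: "0 < taboo_dist n s" by blast
  obtain u v w where s: "s = (u, v)" and t: "t = (v, w)" and "w \<noteq> i" and "{u, v} \<in> E"
    and step_pos: "0 < bbrw_step E u v w"
    using step.hyps(2) by (cases s, cases t) (auto simp: bbrw_move_avoiding_def bbrw_move_def)
  moreover have "{v, w} \<in> E"
    using step.hyps(2) t by (auto simp: bbrw_move_avoiding_def dest: bbrw_move_arc)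
  then have "w \<in> V" using edge_in_V by blast
  moreover have "0 < taboo_dist n (u, v) * bbrw_step E u v w" using n s step_pos by simp
  moreover have "taboo_dist n (u, v) * bbrw_step E u v w
      \<le> (\<Sum>u'\<in>V. taboo_dist n (u', v) * bbrw_step E u' v w)"
    using finite_V edge_in_V[OF \<open>{u, v} \<in> E\<close>]
    by (intro member_le_sum mult_nonneg_nonneg taboo_dist_nonneg bbrw_step_nonneg) auto
  ultimately have "0 < taboo_dist (Suc n) t" by (simp add: taboo_dist_def taboo_step_def)
  then show ?case by blast
qed

end

lemma bbrw_path_prob_snoc:
  assumes "length ys = Suc (Suc n)"
  shows "bbrw_path_prob E (ys @ [w]) = bbrw_path_prob E ys * bbrw_step E (ys ! n) (ys ! Suc n) w"
proof -
  define F where "F zs k = bbrw_step E (zs ! k) (zs ! Suc k) (zs ! Suc (Suc k))" for zs k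
  have "(\<Prod>k\<in>{0..<Suc n}. F (ys @ [w]) k) = (\<Prod>k\<in>{0..<n}. F (ys @ [w]) k) * F (ys @ [w]) n"
    by (simp add: prod.atLeast0_lessThan_Suc)
  also have "(\<Prod>k\<in>{0..<n}. F (ys @ [w]) k) = (\<Prod>k\<in>{0..<n}. F ys k)"
    using assms by (intro prod.cong refl) (simp add: F_def nth_append)
  also have "F (ys @ [w]) n = bbrw_step E (ys ! n) (ys ! Suc n) w"
    using assms by (simp add: F_def nth_append)
  finally show ?thesis
    using assms by (simp add: bbrw_path_prob_def nth_append F_def mult.assoc)
qed

context bbrw_taboo
begin

definition avoiding_paths :: "nat \<Rightarrow> 'a list set" where
  "avoiding_paths n = {xs. length xs = Suc (Suc n) \<and> set xs \<subseteq> V \<and> xs ! 0 = i \<and>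
     (\<forall>k. 0 < k \<and> k < Suc (Suc n) \<longrightarrow> xs ! k \<noteq> i)}"

lemma avoiding_paths_0: "avoiding_paths 0 = (\<lambda>v. [i, v]) ` (V - {i})"
proof
  show "avoiding_paths 0 \<subseteq> (\<lambda>v. [i, v]) ` (V - {i})"
  proof
    fix xs assume xs: "xs \<in> avoiding_paths 0"
    then obtain a b where "xs = [a, b]"
      by (auto simp: avoiding_paths_def length_Suc_conv)
    then show "xs \<in> (\<lambda>v. [i, v]) ` (V - {i})" using xs by (auto simp: avoiding_paths_def)
  qed
qed (use i_in_V in \<open>auto simp: avoiding_paths_def less_Suc_eq nth_Cons'\<close>)

lemma snoc_image_avoiding_paths:
  "(\<lambda>(ys, w). ys @ [w]) ` (avoiding_paths n \<times> {w \<in> V. P w}) =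
     {xs. length xs = Suc (Suc (Suc n)) \<and> set xs \<subseteq> V \<and> xs ! 0 = i \<and>
       (\<forall>k. 0 < k \<and> k < Suc (Suc n) \<longrightarrow> xs ! k \<noteq> i) \<and> P (xs ! Suc (Suc n))}"
    (is "?image = ?S")
proof
  show "?image \<subseteq> ?S"
    by (auto simp: avoiding_paths_def nth_append)
  show "?S \<subseteq> ?image"
  proof
    fix xs assume xs: "xs \<in> ?S"
    then have "xs \<noteq> []" by auto
    then have "xs = butlast xs @ [last xs]" by simp
    moreover have "butlast xs \<in> avoiding_paths n"
      using xs by (auto simp: avoiding_paths_def nth_butlast dest: in_set_butlastD)
    moreover have "last xs \<in> {w \<in> V. P w}"
      using xs \<open>xs \<noteq> []\<close> by (auto simp: last_conv_nth)
    ultimately show "xs \<in> ?image" by (auto intro!: image_eqI[of _ _ "(butlast xs, last xs)"])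
  qed
qed

lemma inj_on_snoc: "inj_on (\<lambda>(ys, w). ys @ [w]) A"
  by (auto simp: inj_on_def)

lemma avoiding_paths_Suc:
  "avoiding_paths (Suc n) = (\<lambda>(ys, w). ys @ [w]) ` (avoiding_paths n \<times> {w \<in> V. w \<noteq> i})"
  unfolding snoc_image_avoiding_paths by (auto simp: avoiding_paths_def less_Suc_eq)

lemma sum_avoiding_paths_Suc:
  "(\<Sum>xs\<in>avoiding_paths (Suc n). bbrw_path_prob E xs * f (xs ! Suc n) (xs ! Suc (Suc n))) =
     (\<Sum>ys\<in>avoiding_paths n. bbrw_path_prob E ys *
        (\<Sum>w\<in>{w \<in> V. w \<noteq> i}. bbrw_step E (ys ! n) (ys ! Suc n) w * f (ys ! Suc n) w))"
proof -
  have length: "length ys = Suc (Suc n)" if "ys \<in> avoiding_paths n" for ys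
    using that by (simp add: avoiding_paths_def)
  have "(\<Sum>xs\<in>avoiding_paths (Suc n). bbrw_path_prob E xs * f (xs ! Suc n) (xs ! Suc (Suc n))) =
      (\<Sum>ys\<in>avoiding_paths n. \<Sum>w\<in>{w \<in> V. w \<noteq> i}.
        bbrw_path_prob E (ys @ [w]) * f ((ys @ [w]) ! Suc n) ((ys @ [w]) ! Suc (Suc n)))"
    unfolding avoiding_paths_Suc sum.reindex[OF inj_on_snoc] sum.cartesian_product
    by (simp add: comp_def case_prod_unfold)
  also have "\<dots> = (\<Sum>ys\<in>avoiding_paths n. bbrw_path_prob E ys *
        (\<Sum>w\<in>{w \<in> V. w \<noteq> i}. bbrw_step E (ys ! n) (ys ! Suc n) w * f (ys ! Suc n) w))"
    using length
    by (intro sum.cong refl) (simp add: bbrw_path_prob_snoc nth_append sum_distrib_left mult.assoc)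
  finally show ?thesis .
qed

lemma sum_taboo_dist_Suc:
  "(\<Sum>u\<in>V. \<Sum>v\<in>V. taboo_dist n (u, v) * (\<Sum>w\<in>{w \<in> V. w \<noteq> i}. bbrw_step E u v w * f v w)) =
     (\<Sum>v\<in>V. \<Sum>w\<in>V. taboo_dist (Suc n) (v, w) * f v w)"
proof -
  let ?h = "\<lambda>u v w. taboo_dist n (u, v) * bbrw_step E u v w * f v w"
  have "(\<Sum>u\<in>V. \<Sum>v\<in>V. taboo_dist n (u, v) * (\<Sum>w\<in>{w \<in> V. w \<noteq> i}. bbrw_step E u v w * f v w)) =
      (\<Sum>u\<in>V. \<Sum>v\<in>V. \<Sum>w\<in>{w \<in> V. w \<noteq> i}. ?h u v w)"
    by (simp add: sum_distrib_left mult.assoc)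
  also have "\<dots> = (\<Sum>v\<in>V. \<Sum>u\<in>V. \<Sum>w\<in>{w \<in> V. w \<noteq> i}. ?h u v w)"
    by (rule sum.swap)
  also have "\<dots> = (\<Sum>v\<in>V. \<Sum>w\<in>{w \<in> V. w \<noteq> i}. \<Sum>u\<in>V. ?h u v w)"
    by (intro sum.cong refl sum.swap)
  also have "\<dots> = (\<Sum>v\<in>V. \<Sum>w\<in>V. taboo_dist (Suc n) (v, w) * f v w)"
    using finite_V
    by (intro sum.cong refl sum.mono_neutral_cong_left)
      (auto simp: taboo_dist_def taboo_step_def sum_distrib_right)
  finally show ?thesis .
qed

lemma sum_avoiding_paths:
  "(\<Sum>xs\<in>avoiding_paths n. bbrw_path_prob E xs * f (xs ! n) (xs ! Suc n)) =
     (\<Sum>u\<in>V. \<Sum>v\<in>V. taboo_dist n (u, v) * f u v)"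
proof (induction n arbitrary: f)
  case 0
  have "bbrw_path_prob E [i, v] = (if v \<in> nbrs E i then 1 / deg else 0)" for v
    by (simp add: bbrw_path_prob_def)
  then have "(\<Sum>xs\<in>avoiding_paths 0. bbrw_path_prob E xs * f (xs ! 0) (xs ! Suc 0))
      = (\<Sum>v\<in>V - {i}. (if v \<in> nbrs E i then 1 / deg else 0) * f i v)"
    unfolding avoiding_paths_0 by (subst sum.reindex) (auto simp: inj_on_def)
  also have "\<dots> = (\<Sum>v\<in>V - {i}. if v \<in> nbrs E i then f i v / deg else 0)"
    by (intro sum.cong) auto
  also have "\<dots> = (\<Sum>v\<in>V. if v \<in> nbrs E i then f i v / deg else 0)"
    using finite_V edge_ends_distinct[of i i]
    by (intro sum.mono_neutral_left) (auto simp: mem_nbrs_iff)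
  also have "\<dots> = (\<Sum>u\<in>V. if u = i then (\<Sum>v\<in>V. if v \<in> nbrs E i then f i v / deg else 0) else 0)"
    using finite_V i_in_V by simp
  also have "\<dots> = (\<Sum>u\<in>V. \<Sum>v\<in>V. taboo_dist 0 (u, v) * f u v)"
    by (intro sum.cong refl) (auto simp: taboo_dist_def init_dist_def intro!: sum.cong)
  finally show ?case .
next
  case (Suc n)
  let ?g = "\<lambda>u v. \<Sum>w\<in>{w \<in> V. w \<noteq> i}. bbrw_step E u v w * f v w"
  show ?case
    using Suc.IH[of ?g] by (simp only: sum_avoiding_paths_Suc sum_taboo_dist_Suc)
qed

lemma first_return_prob_Suc_Suc:
  "first_return_prob V E i (Suc (Suc n)) = (\<Sum>u\<in>V. \<Sum>v\<in>V. taboo_dist n (u, v) * bbrw_step E u v i)"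
proof -
  have "{w \<in> V. w = i} = {i}" using i_in_V by auto
  then have "(\<lambda>(ys, w). ys @ [w]) ` (avoiding_paths n \<times> {i}) =
     {xs. length xs = Suc (Suc (Suc n)) \<and> set xs \<subseteq> V \<and> xs ! 0 = i \<and> xs ! Suc (Suc n) = i \<and>
       (\<forall>k. 0 < k \<and> k < Suc (Suc n) \<longrightarrow> xs ! k \<noteq> i)}"
    using snoc_image_avoiding_paths[of n "\<lambda>w. w = i"] by auto
  then have "first_return_prob V E i (Suc (Suc n))
      = sum (bbrw_path_prob E) ((\<lambda>(ys, w). ys @ [w]) ` (avoiding_paths n \<times> {i}))"
    by (simp add: first_return_prob_def)
  also have "\<dots> = (\<Sum>(ys, w)\<in>avoiding_paths n \<times> {i}. bbrw_path_prob E (ys @ [w]))"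
    by (subst sum.reindex[OF inj_on_snoc]) (simp add: comp_def case_prod_unfold)
  also have "\<dots> = (\<Sum>ys\<in>avoiding_paths n. bbrw_path_prob E ys * bbrw_step E (ys ! n) (ys ! Suc n) i)"
    by (simp add: sum.cartesian_product[symmetric] bbrw_path_prob_snoc avoiding_paths_def)
  also have "\<dots> = (\<Sum>u\<in>V. \<Sum>v\<in>V. taboo_dist n (u, v) * bbrw_step E u v i)"
    by (rule sum_avoiding_paths)
  finally show ?thesis .
qed

lemma first_return_prob_Suc_0: "first_return_prob V E i (Suc 0) = 0"
  using edge_ends_distinct[of i i]
  by (auto simp: first_return_prob_def bbrw_path_prob_def mem_nbrs_iff intro!: sum.neutral)

section \<open>The invariant weight on arcs\<close>

definition arc_weight :: "'a \<times> 'a \<Rightarrow> real" where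
  "arc_weight t = (if t \<in> arcs \<and> snd t \<noteq> i then 1 / deg else 0)"

lemma taboo_step_arc_weight:
  "taboo_step arc_weight (v, w) = (if v \<noteq> i \<and> w \<noteq> i \<and> {v, w} \<in> E then 1 / deg else 0)"
proof -
  have "(\<Sum>u\<in>V. arc_weight (u, v) * bbrw_step E u v w)
      = (\<Sum>u\<in>nbrs E v. if v \<noteq> i then bbrw_step E u v w / deg else 0)"
    using finite_V nbrs_subset_V
    by (intro sum.mono_neutral_cong_right) (auto simp: arc_weight_def arcs_def mem_nbrs_iff)
  also have "\<dots> = (if v \<noteq> i \<and> w \<in> nbrs E v then 1 / deg else 0)"
    by (cases "v = i") (simp_all add: sum_divide_distrib[symmetric] bbrw_step_column_sum)
  finally show ?thesis
    using edge_in_V by (auto simp: taboo_step_def mem_nbrs_iff insert_commute)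
qed

lemma arc_weight_eq: "arc_weight t = init_dist t + taboo_step arc_weight t"
  using edge_ends_distinct[of i i]
  by (cases t) (auto simp: taboo_step_arc_weight arc_weight_def init_dist_def arcs_def mem_nbrs_iff
      insert_commute dest: edge_ends_distinct)

lemma sum_taboo_dist_add_remainder:
  "(\<Sum>k<N. taboo_dist k t) + (taboo_step ^^ N) arc_weight t = arc_weight t"
proof (induction N arbitrary: t)
  case (Suc N)
  have "(taboo_step ^^ N) arc_weight t
      = (taboo_step ^^ N) (\<lambda>s. init_dist s + taboo_step arc_weight s) t"
    by (subst arc_weight_eq[abs_def]) (rule refl)
  also have "\<dots> = taboo_dist N t + (taboo_step ^^ Suc N) arc_weight t"
    by (simp add: funpow_taboo_step_add taboo_dist_def funpow_Suc_right del: funpow.simps)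
  finally show ?case using Suc[of t] by simp
qed simp

lemma mass_arc_weight: "mass arc_weight = 2 * real (card E) / deg - 1"
proof -
  let ?A = "{t \<in> arcs. snd t \<noteq> i}"
  have "{t \<in> arcs. snd t = i} = (\<lambda>u. (u, i)) ` nbrs E i"
    by (auto simp: arcs_def mem_nbrs_iff)
  then have "card {t \<in> arcs. snd t = i} = degree E i"
    by (simp add: card_image inj_on_def degree_def)
  moreover have "card ?A + card {t \<in> arcs. snd t = i} = card arcs"
    using finite_arcs by (subst card_Un_disjoint[symmetric]) (auto intro: arg_cong[where f = card])
  ultimately have card_A: "real (card ?A) = 2 * real (card E) - deg"
    using card_arcs by simp
  have "mass arc_weight = (\<Sum>t\<in>V \<times> V. arc_weight t)"
    by (simp add: mass_def sum.cartesian_product)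
  also have "\<dots> = (\<Sum>t\<in>?A. 1 / deg)"
    using finite_V arcs_subset by (intro sum.mono_neutral_cong_right) (auto simp: arc_weight_def)
  also have "\<dots> = 2 * real (card E) / deg - 1"
    using card_A deg_pos by (simp add: field_simps)
  finally show ?thesis .
qed

lemma mass_remainder_nonneg: "0 \<le> mass ((taboo_step ^^ N) arc_weight)"
  by (intro mass_nonneg funpow_taboo_step_nonneg) (simp add: arc_weight_def)

lemma sum_survival_add_mass_remainder:
  "(\<Sum>k<N. survival k) + mass ((taboo_step ^^ N) arc_weight) = mass arc_weight"
proof -
  have "mass arc_weight = mass (\<lambda>t. (\<Sum>k<N. taboo_dist k t) + (taboo_step ^^ N) arc_weight t)"
    using sum_taboo_dist_add_remainder by simp
  then show ?thesis by (simp add: mass_add mass_sum survival_def)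
qed

lemma summable_survival: "summable survival"
proof (rule summableI_nonneg_bounded)
  show "sum survival {..<N} \<le> mass arc_weight" for N
    using sum_survival_add_mass_remainder[of N] mass_remainder_nonneg[of N] by simp
qed (rule survival_nonneg)

context
  assumes reach:
    "\<And>v w. {v, w} \<in> E \<Longrightarrow> w \<noteq> i \<Longrightarrow> \<exists>x. {i, x} \<in> E \<and> (bbrw_move_avoiding i)\<^sup>*\<^sup>* (i, x) (v, w)"
begin

lemma arc_weight_le_taboo_dist_combination:
  obtains c m where "\<And>t. 0 \<le> c t"
    and "\<And>s. arc_weight s \<le> (\<Sum>t\<in>{t \<in> arcs. snd t \<noteq> i}. c t * taboo_dist (m t) s)"
proof -
  let ?A = "{t \<in> arcs. snd t \<noteq> i}"
  have "\<forall>t\<in>?A. \<exists>n. 0 < taboo_dist n t"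
    using reach taboo_dist_pos_if_reachable by (fastforce simp: arcs_def)
  then obtain m where m: "\<And>t. t \<in> ?A \<Longrightarrow> 0 < taboo_dist (m t) t" by metis
  define c where "c t = 1 / (deg * taboo_dist (m t) t)" for t
  have c_nonneg: "0 \<le> c t" for t using deg_pos taboo_dist_nonneg by (simp add: c_def)
  have "arc_weight s \<le> (\<Sum>t\<in>?A. c t * taboo_dist (m t) s)" for s
  proof (cases "s \<in> ?A")
    case True
    then have "arc_weight s = c s * taboo_dist (m s) s"
      using m[OF True] deg_pos by (simp add: arc_weight_def c_def)
    also have "\<dots> \<le> (\<Sum>t\<in>?A. c t * taboo_dist (m t) s)"
      using True finite_arcs c_nonneg taboo_dist_nonneg
      by (intro member_le_sum mult_nonneg_nonneg) auto
    finally show ?thesis .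
  next
    case False
    then have "arc_weight s = 0" unfolding arc_weight_def by auto
    moreover have "0 \<le> (\<Sum>t\<in>?A. c t * taboo_dist (m t) s)"
      by (intro sum_nonneg mult_nonneg_nonneg c_nonneg taboo_dist_nonneg)
    ultimately show ?thesis by simp
  qed
  with c_nonneg show ?thesis by (rule that)
qed

lemma mass_remainder_tendsto_zero: "(\<lambda>N. mass ((taboo_step ^^ N) arc_weight)) \<longlonglongrightarrow> 0"
proof -
  let ?A = "{t \<in> arcs. snd t \<noteq> i}"
  obtain c m where c_nonneg: "\<And>t. 0 \<le> c t"
    and bound: "\<And>s. arc_weight s \<le> (\<Sum>t\<in>?A. c t * taboo_dist (m t) s)"
    using arc_weight_le_taboo_dist_combination by blast
  have finite_A: "finite ?A" using finite_arcs by simp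
  have upper: "mass ((taboo_step ^^ N) arc_weight) \<le> (\<Sum>t\<in>?A. c t * survival (N + m t))" for N
  proof -
    have "mass ((taboo_step ^^ N) arc_weight)
        \<le> mass ((taboo_step ^^ N) (\<lambda>s. \<Sum>t\<in>?A. c t * taboo_dist (m t) s))"
      by (intro mass_mono funpow_taboo_step_mono bound)
    also have "\<dots> = mass (\<lambda>s. \<Sum>t\<in>?A. c t * taboo_dist (N + m t) s)"
      by (simp only: funpow_taboo_step_sum[OF finite_A] funpow_taboo_step_taboo_dist)
    also have "\<dots> = (\<Sum>t\<in>?A. c t * survival (N + m t))"
      by (simp only: mass_sum mass_scale survival_def)
    finally show ?thesis .
  qed
  have lim: "(\<lambda>N. \<Sum>t\<in>?A. c t * survival (N + m t)) \<longlonglongrightarrow> 0"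
  proof (intro tendsto_null_sum tendsto_mult_right_zero)
    fix t
    show "(\<lambda>N. survival (N + m t)) \<longlonglongrightarrow> 0"
      by (rule LIMSEQ_ignore_initial_segment[OF summable_LIMSEQ_zero[OF summable_survival]])
  qed
  show ?thesis
  proof (rule Lim_null_comparison[OF always_eventually lim], rule allI)
    show "norm (mass ((taboo_step ^^ N) arc_weight)) \<le> (\<Sum>t\<in>?A. c t * survival (N + m t))" for N
      using upper[of N] mass_remainder_nonneg[of N] by simp
  qed
qed

lemma survival_sums: "survival sums mass arc_weight"
proof -
  have "(\<lambda>N. mass arc_weight - mass ((taboo_step ^^ N) arc_weight)) \<longlonglongrightarrow> mass arc_weight - 0"
    by (intro tendsto_diff tendsto_const mass_remainder_tendsto_zero)
  moreover have "mass arc_weight - mass ((taboo_step ^^ N) arc_weight) = (\<Sum>k<N. survival k)" for N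
    using sum_survival_add_mass_remainder[of N] by simp
  ultimately show ?thesis by (simp add: sums_def)
qed

theorem return_time_eq: "return_time V E i = ennreal (2 * real (card E) / deg)"
proof -
  \<comment> \<open>\<open>q n = P(T > n)\<close>: the walk cannot be back at \<open>i\<close> at time 1, so \<open>P(T > 0) = P(T > 1)\<close>\<close>
  define q where "q n = survival (n - 1)" for n
  have "first_return_prob V E i (Suc n) = q n - q (Suc n)" for n
    by (cases n)
      (simp_all add: q_def first_return_prob_Suc_0 first_return_prob_Suc_Suc survival_Suc)
  moreover have "q 0 = 1" by (simp add: q_def survival_0)
  moreover have "decseq q"
    using decseq_survival by (simp add: decseq_def q_def diff_le_mono)
  moreover have "(\<lambda>n. q (Suc n)) sums mass arc_weight"
    using survival_sums by (simp add: q_def)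
  then have "q sums (mass arc_weight + 1)" using \<open>q 0 = 1\<close> sums_Suc_iff[of q] by simp
  ultimately have "return_time V E i = ennreal (mass arc_weight + 1)"
    using return_time_eq_suminf_tail[of V E i q] survival_nonneg
    by (simp add: q_def sums_summable sums_unique[symmetric])
  then show ?thesis by (simp add: mass_arc_weight)
qed

end

end

theorem lemma6:
  fixes V :: "'a set" and E :: "'a set set" and i :: 'a
  assumes "tree V E" and "E \<noteq> {}" and "i \<in> V"
  shows "return_time V E i = ennreal (2 * real (card E) / real (degree E i))"
proof -
  interpret finite_tree V E using assms(1) by unfold_locales
  interpret bbrw_taboo V E i using assms(3) nbrs_nonempty[OF assms(3,2)] by unfold_locales
  show ?thesis using bbrw_move_avoiding_reaches_arc[OF assms(3)] by (rule return_time_eq)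
qed

end
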